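(* For each $\eta\in(0,\pi/3)$ and each integer $n\ge0$, $\angle b_0z_0z_1=\angle z_nz_{n+1}z_{n+2}=\angle w_nw_{n+1}w_{n+2}=\pi-\eta$.
   Context: Let $a=\frac{e^{-i\eta}}{2\cos\eta}$, $c=\frac{1}{1-|a|^4}$, and for integers $j\ge0$ put $z_j=ca^{j+1}$, $w_j=1-c|a|^2a^j$, $b_0=a+c|a|^4$. For $u,v,w\in\mathbb{C}$, $\angle uvw=\arg\frac{w-v}{u-v}$ with $\arg$ taking values in $[0,2\pi)$. *)

theory Defs
  imports "HOL-Analysis.Analysis" "HOL-Complex_Analysis.Complex_Analysis"
begin

definition arg2pi :: "complex \<Rightarrow> real" where
  "arg2pi z = (if Arg z < 0 then Arg z + 2 * pi else Arg z)"

definition cangle :: "complex \<Rightarrow> complex \<Rightarrow> complex \<Rightarrow> real" where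
  "cangle u v w = arg2pi ((w - v) / (u - v))"

definition aa :: "real \<Rightarrow> complex" where
  "aa \<eta> = exp (- \<i> * of_real \<eta>) / of_real (2 * cos \<eta>)"

definition cc :: "real \<Rightarrow> complex" where
  "cc \<eta> = 1 / (1 - of_real (cmod (aa \<eta>) ^ 4))"

definition zz :: "real \<Rightarrow> nat \<Rightarrow> complex" where
  "zz \<eta> j = cc \<eta> * aa \<eta> ^ (j + 1)"

definition ww :: "real \<Rightarrow> nat \<Rightarrow> complex" where
  "ww \<eta> j = 1 - cc \<eta> * of_real (cmod (aa \<eta>) ^ 2) * aa \<eta> ^ j"

definition bb0 :: "real \<Rightarrow> complex" where
  "bb0 \<eta> = aa \<eta> + cc \<eta> * of_real (cmod (aa \<eta>) ^ 4)"

end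

theory Submission
  imports Defs
begin

text \<open>Each of the three quotients defining the angles is a positive real multiple of \<open>-a\<close>:
  the points \<open>z\<^sub>j\<close> and \<open>w\<^sub>j\<close> have the form \<open>p + q a\<^sup>j\<close>, whose consecutive differences have
  ratio \<open>a\<close>, and \<open>b\<^sub>0 - z\<^sub>0 = c|a|\<^sup>4(1 - a)\<close> because \<open>c(1 - |a|\<^sup>4) = 1\<close>. Since
  \<open>-a = exp (i(\<pi> - \<eta>)) / (2 cos \<eta>)\<close>, every angle equals \<open>\<pi> - \<eta>\<close>. The bound \<open>\<eta> < \<pi>/3\<close>
  only serves to make \<open>|a| < 1\<close>, so that \<open>c\<close> is defined and \<open>a \<noteq> 1\<close>.\<close>

lemma arg2pi_times_of_real [simp]:
  assumes "0 < t"
  shows "arg2pi (of_real t * z) = arg2pi z"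
  using assms by (simp add: arg2pi_def)

lemma arg2pi_rcis:
  assumes "0 < r" "0 \<le> \<theta>" "\<theta> < 2 * pi"
  shows "arg2pi (rcis r \<theta>) = \<theta>"
proof (cases "\<theta> \<le> pi")
  case True
  then have "Arg (rcis r \<theta>) = \<theta>"
    using assms by (intro Arg_unique') auto
  then show ?thesis
    using assms by (simp add: arg2pi_def)
next
  case False
  have "rcis r \<theta> = rcis r (\<theta> - 2 * pi)"
    by (simp add: rcis_def cis.ctr cos_diff sin_diff)
  then have "Arg (rcis r \<theta>) = \<theta> - 2 * pi"
    using assms False by (intro Arg_unique') auto
  then show ?thesis
    using assms by (simp add: arg2pi_def)
qed

lemma affine_geometric_difference_ratio:
  fixes p q a :: "'a::field"
  assumes "q \<noteq> 0" "a \<noteq> 0" "a \<noteq> 1"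
  shows "((p + q * a ^ (n + 2)) - (p + q * a ^ (n + 1))) / ((p + q * a ^ n) - (p + q * a ^ (n + 1)))
         = - a"
proof -
  have "(p + q * a ^ (n + 2)) - (p + q * a ^ (n + 1)) = (q * a ^ n * (1 - a)) * - a"
    by (simp add: algebra_simps power2_eq_square)
  moreover have "(p + q * a ^ n) - (p + q * a ^ (n + 1)) = q * a ^ n * (1 - a)"
    by (simp add: algebra_simps)
  ultimately show ?thesis
    using assms by simp
qed

lemma initial_difference_ratio:
  fixes a q c :: "'a::field"
  assumes "c * (1 - q) = 1" "q \<noteq> 0" "a \<noteq> 1"
  shows "(c * a ^ 2 - c * a) / (a + c * q - c * a) = - a / q"
proof -
  have "a + c * q - c * a = c * q * (1 - a) + a * (1 - c * (1 - q))"
    by (simp add: algebra_simps)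
  also have "\<dots> = c * q * (1 - a)"
    using assms(1) by simp
  finally have "a + c * q - c * a = c * q * (1 - a)" .
  moreover have "c * a ^ 2 - c * a = c * (1 - a) * - a"
    by (simp add: algebra_simps power2_eq_square)
  ultimately have "(c * a ^ 2 - c * a) / (a + c * q - c * a) = (c * (1 - a) * - a) / (c * (1 - a) * q)"
    by (simp add: ac_simps)
  moreover have "c * (1 - a) \<noteq> 0"
    using assms by auto
  ultimately show ?thesis
    by simp
qed

lemma norm_aa:
  assumes "0 < cos \<eta>"
  shows "cmod (aa \<eta>) = 1 / (2 * cos \<eta>)"
  using assms by (simp add: aa_def norm_divide)

lemma norm_aa_less_1:
  assumes "0 \<le> \<eta>" "\<eta> < pi / 3"
  shows "cmod (aa \<eta>) < 1"
proof -
  have "cos (pi / 3) < cos \<eta>"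
    using assms by (intro cos_monotone_0_pi) auto
  then have "1 / 2 < cos \<eta>"
    by (simp add: cos_60)
  then show ?thesis
    by (simp add: norm_aa)
qed

lemma minus_aa_eq_rcis:
  "- aa \<eta> = rcis (1 / (2 * cos \<eta>)) (pi - \<eta>)"
proof -
  have "cis (pi - \<eta>) = - cis (- \<eta>)"
    by (simp add: complex_eq_iff)
  then show ?thesis
    by (simp add: aa_def rcis_def cis_conv_exp)
qed

lemma cc_mult_eq_1:
  assumes "cmod (aa \<eta>) < 1"
  shows "cc \<eta> * (1 - of_real (cmod (aa \<eta>) ^ 4)) = 1"
proof -
  have "cmod (aa \<eta>) ^ 4 < 1"
    using assms by (simp add: power_less_one_iff)
  then show ?thesis
    by (simp add: cc_def field_simps flip: of_real_power)
qed

lemma aa_cc_nondegenerate: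
  assumes "0 \<le> \<eta>" "\<eta> < pi / 3"
  shows "aa \<eta> \<noteq> 0" "aa \<eta> \<noteq> 1" "cc \<eta> \<noteq> 0"
proof -
  have "cos \<eta> \<noteq> 0"
    using assms cos_gt_zero_pi[of \<eta>] by simp
  then show "aa \<eta> \<noteq> 0"
    by (simp add: aa_def)
  have "cmod (aa \<eta>) < 1"
    using assms by (rule norm_aa_less_1)
  then show "aa \<eta> \<noteq> 1" "cc \<eta> \<noteq> 0"
    using cc_mult_eq_1[of \<eta>] by auto
qed

lemma arg2pi_minus_aa:
  assumes "- pi / 2 < \<eta>" "\<eta> < pi / 2"
  shows "arg2pi (- aa \<eta>) = pi - \<eta>"
proof -
  have "0 < cos \<eta>"
    using assms by (intro cos_gt_zero_pi) auto
  then show ?thesis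
    using assms by (simp add: minus_aa_eq_rcis arg2pi_rcis)
qed

lemma cangle_bb0_zz:
  assumes "0 < \<eta>" "\<eta> < pi / 3"
  shows "cangle (bb0 \<eta>) (zz \<eta> 0) (zz \<eta> 1) = pi - \<eta>"
proof -
  define r where "r = cmod (aa \<eta>)"
  have "0 < r"
    using assms aa_cc_nondegenerate by (simp add: r_def)
  have "cangle (bb0 \<eta>) (zz \<eta> 0) (zz \<eta> 1) = arg2pi (- aa \<eta> / of_real (r ^ 4))"
    using initial_difference_ratio[of "cc \<eta>" "of_real (r ^ 4)" "aa \<eta>"] \<open>0 < r\<close>
      cc_mult_eq_1 norm_aa_less_1 aa_cc_nondegenerate assms
    by (simp add: cangle_def bb0_def zz_def r_def power2_eq_square)
  also have "\<dots> = arg2pi (of_real (1 / r ^ 4) * - aa \<eta>)"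
    by (simp add: field_simps)
  also have "\<dots> = pi - \<eta>"
    using \<open>0 < r\<close> assms by (subst arg2pi_times_of_real) (simp_all add: arg2pi_minus_aa)
  finally show ?thesis .
qed

lemma cangle_zz:
  assumes "0 < \<eta>" "\<eta> < pi / 3"
  shows "cangle (zz \<eta> n) (zz \<eta> (n + 1)) (zz \<eta> (n + 2)) = pi - \<eta>"
proof -
  note nondegenerate = aa_cc_nondegenerate[of \<eta>]
  have "cc \<eta> * aa \<eta> \<noteq> 0"
    using assms nondegenerate by simp
  moreover have "zz \<eta> = (\<lambda>j. 0 + (cc \<eta> * aa \<eta>) * aa \<eta> ^ j)"
    by (simp add: fun_eq_iff zz_def)
  ultimately have "cangle (zz \<eta> n) (zz \<eta> (n + 1)) (zz \<eta> (n + 2)) = arg2pi (- aa \<eta>)"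
    using assms nondegenerate affine_geometric_difference_ratio[of "cc \<eta> * aa \<eta>" "aa \<eta>" 0 n]
    by (simp only: cangle_def) simp
  also have "\<dots> = pi - \<eta>"
    using assms by (simp add: arg2pi_minus_aa)
  finally show ?thesis .
qed

lemma cangle_ww:
  assumes "0 < \<eta>" "\<eta> < pi / 3"
  shows "cangle (ww \<eta> n) (ww \<eta> (n + 1)) (ww \<eta> (n + 2)) = pi - \<eta>"
proof -
  define q where "q = - cc \<eta> * of_real (cmod (aa \<eta>) ^ 2)"
  note nondegenerate = aa_cc_nondegenerate[of \<eta>]
  have "q \<noteq> 0"
    using assms nondegenerate by (simp add: q_def)
  moreover have "ww \<eta> = (\<lambda>j. 1 + q * aa \<eta> ^ j)"
    by (simp add: fun_eq_iff ww_def q_def)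
  ultimately have "cangle (ww \<eta> n) (ww \<eta> (n + 1)) (ww \<eta> (n + 2)) = arg2pi (- aa \<eta>)"
    using assms nondegenerate affine_geometric_difference_ratio[of q "aa \<eta>" 1 n]
    by (simp only: cangle_def) simp
  also have "\<dots> = pi - \<eta>"
    using assms by (simp add: arg2pi_minus_aa)
  finally show ?thesis .
qed

theorem lemma6p1:
  fixes \<eta> :: real and n :: nat
  assumes "0 < \<eta>" and "\<eta> < pi / 3"
  shows "cangle (bb0 \<eta>) (zz \<eta> 0) (zz \<eta> 1) = pi - \<eta> \<and>
         cangle (zz \<eta> n) (zz \<eta> (n + 1)) (zz \<eta> (n + 2)) = pi - \<eta> \<and>
         cangle (ww \<eta> n) (ww \<eta> (n + 1)) (ww \<eta> (n + 2)) = pi - \<eta>"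
  using assms cangle_bb0_zz cangle_zz cangle_ww by blast

end
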